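(* Let $p,a$ be positive integers with $\gcd(a,p)=1$, let $r\ge0$, $m\ge1$ and $1\le v\le p$ be integers. Let $b_{v,r,a,m}(n)$ denote the number of partitions of $n$ in which every multiplicity is congruent to $ja\pmod p$ for some $j\in\{0,1,\ldots,v-1\}$ and, for such $j$, lies between $j(pr+a)$ and $j(pr+a)+p(m-1)$ inclusive (equivalently, every multiplicity has the form $j(pr+a)+pk$ with $0\le j\le v-1$, $0\le k\le m-1$). Set $b_{v,r,a,m}(0)=1$ and $b_{v,r,a,m}(n)=0$ for $n<0$. If $\gcd(v,p)\nmid n$, then $$b_{v,r,a,m}(n)=\sum_{j=1}^{n}(-1)^{j+1}\Big(b_{v,r,a,m}\big(n-\tfrac{(pr+a)j(3j-1)}{2}\big)+b_{v,r,a,m}\big(n-\tfrac{(pr+a)j(3j+1)}{2}\big)\Big).$$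
   Context: Multiplicity of a part means the number of times it appears in the partition. *)

theory Defs
  imports Main "HOL-Library.Multiset"
begin

definition partitions :: "nat \<Rightarrow> nat multiset set" where
  "partitions n = {M. (\<forall>x\<in>#M. x > 0) \<and> sum_mset M = n}"

definition allowed_mult :: "nat \<Rightarrow> nat \<Rightarrow> nat \<Rightarrow> nat \<Rightarrow> nat \<Rightarrow> nat set" where
  "allowed_mult p v r a m = {j * (p * r + a) + p * k | j k. j < v \<and> k < m}"

definition b :: "nat \<Rightarrow> nat \<Rightarrow> nat \<Rightarrow> nat \<Rightarrow> nat \<Rightarrow> int \<Rightarrow> int" where
  "b p v r a m n = (if n < 0 then 0 else
     int (card {M \<in> partitions (nat n). \<forall>x\<in>#M. count M x \<in> allowed_mult p v r a m}))"

end

theory Submission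
  imports Defs "HOL-Computational_Algebra.Formal_Power_Series" "HOL-Number_Theory.Cong"
begin

unbundle fps_syntax

(* Let S be the set of allowed multiplicities and N = pr + a. Since gcd N p = 1 and v <= p, the
   numbers jN + pk (j < v, k < m) are pairwise distinct, so the generating function of b is
   prod_x sum_{s in S} q^(xs) = prod_x (1 - q^(xNv)) / (1 - q^(xN)) * sum_{k<m} q^(xpk).
   Multiplying by Euler's product prod_x (1 - q^(xN)) leaves a series whose exponents are all
   divisible by gcd v p, so its coefficient of q^n vanishes; expanding Euler's product by the
   pentagonal number theorem turns this into the recurrence. Only parts x <= n matter, and for
   the truncated Euler product the pentagonal number theorem holds up to degree n by Shanks'
   finite identity. *)

definition shanks_term :: "'a::comm_ring_1 \<Rightarrow> nat \<Rightarrow> nat \<Rightarrow> 'a" where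
  "shanks_term y n k = (-1)^k * (\<Prod>i\<in>{k<..n}. 1 - y^i) * y^(n*k + k*(k+1) div 2)"

definition pentagonal_sum :: "'a::comm_ring_1 \<Rightarrow> nat \<Rightarrow> 'a" where
  "pentagonal_sum y n =
     (\<Sum>j\<le>n. (-1)^j * y^(j*(3*j+1) div 2)) + (\<Sum>j\<in>{1..n}. (-1)^j * y^(j*(3*j-1) div 2))"

lemma shanks_term_Suc_left:
  assumes "k \<le> n"
  shows "shanks_term y (Suc n) k = shanks_term y n k * y^k * (1 - y^Suc n)"
proof -
  have "{k<..Suc n} = insert (Suc n) {k<..n}" using assms by auto
  moreover have "Suc n * k + k*(k+1) div 2 = (n*k + k*(k+1) div 2) + k" by simp
  ultimately show ?thesis unfolding shanks_term_def by (simp add: power_add algebra_simps)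
qed

lemma shanks_term_Suc_right:
  assumes "k < n"
  shows "shanks_term y n (Suc k) * (1 - y^Suc k) = - (shanks_term y n k * y^(n + k + 1))"
proof -
  have "{k<..n} = insert (Suc k) {Suc k<..n}" using assms by auto
  moreover have "n * Suc k + Suc k*(Suc k+1) div 2 = (n*k + k*(k+1) div 2) + (n + k + 1)"
    by (simp add: algebra_simps)
  ultimately show ?thesis unfolding shanks_term_def by (simp add: power_add algebra_simps)
qed

lemma shanks_term_diag: "shanks_term y n n = (-1)^n * y^(n*(3*n+1) div 2)"
proof -
  have "n*n + n*(n+1) div 2 = n*(3*n+1) div 2" by (simp add: algebra_simps)
  then show ?thesis unfolding shanks_term_def by simp
qed

lemma sum_shanks_term_Suc:
  "(\<Sum>k\<le>Suc n. shanks_term y (Suc n) k) =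
     (\<Sum>k\<le>n. shanks_term y n k) - shanks_term y n n * y^(2*n+1) + shanks_term y (Suc n) (Suc n)"
proof -
  let ?T = "shanks_term y n"
  \<comment> \<open>Split \<open>y^k (1 - y^(n+1))\<close> as \<open>1 - (1 - y^k) - y^(n+k+1)\<close>; the middle part telescopes.\<close>
  have "(\<Sum>k\<le>n. ?T k * (1 - y^k)) = (\<Sum>k<n. ?T (Suc k) * (1 - y^Suc k))"
    by (subst sum.atMost_shift) simp
  also have "\<dots> = - (\<Sum>k<n. ?T k * y^(n + k + 1))"
    by (simp add: shanks_term_Suc_right sum_negf del: power_Suc)
  finally have telescope: "(\<Sum>k\<le>n. ?T k * (1 - y^k)) = - (\<Sum>k<n. ?T k * y^(n + k + 1))" .
  have last: "(\<Sum>k\<le>n. ?T k * y^(n+k+1)) = (\<Sum>k<n. ?T k * y^(n+k+1)) + ?T n * y^(2*n+1)"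
    by (simp add: lessThan_Suc_atMost[symmetric] mult_2)
  have "(\<Sum>k\<le>Suc n. shanks_term y (Suc n) k)
      = (\<Sum>k\<le>n. ?T k - ?T k * (1 - y^k) - ?T k * y^(n+k+1)) + shanks_term y (Suc n) (Suc n)"
    by (simp add: shanks_term_Suc_left power_add algebra_simps)
  also have "\<dots> = (\<Sum>k\<le>n. ?T k) - ?T n * y^(2*n+1) + shanks_term y (Suc n) (Suc n)"
    unfolding sum_subtractf telescope last by simp
  finally show ?thesis .
qed

lemma pentagonal_sum_Suc:
  "pentagonal_sum y (Suc n) = pentagonal_sum y n
     + (-1)^Suc n * y^(Suc n*(3*Suc n+1) div 2) + (-1)^Suc n * y^(Suc n*(3*Suc n - 1) div 2)"
proof -
  have "{1..Suc n} = insert (Suc n) {1..n}" by auto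
  then show ?thesis unfolding pentagonal_sum_def by (simp add: algebra_simps)
qed

theorem shanks_identity: "(\<Sum>k\<le>n. shanks_term y n k) = pentagonal_sum y n"
proof (induction n)
  case 0
  then show ?case by (simp add: shanks_term_def pentagonal_sum_def)
next
  case (Suc n)
  have "n*(3*n+1) div 2 + (2*n+1) = Suc n*(3*Suc n - 1) div 2" by (simp add: algebra_simps)
  then have "y^(n*(3*n+1) div 2) * y^(2*n+1) = y^(Suc n*(3*Suc n - 1) div 2)"
    by (simp only: power_add[symmetric])
  then have "shanks_term y n n * y^(2*n+1) = (-1)^n * y^(Suc n*(3*Suc n - 1) div 2)"
    by (simp only: shanks_term_diag mult.assoc)
  then show ?case
    unfolding sum_shanks_term_Suc Suc.IH pentagonal_sum_Suc by (simp add: shanks_term_diag)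
qed

lemma fps_mult_power_nth_below:
  fixes Y f :: "'a::comm_ring_1 fps"
  assumes "Y $ 0 = 0" and "d < e"
  shows "(f * Y^e) $ d = 0"
proof -
  have "(Y^e) $ i = 0" if "i < e" for i
  proof (cases "Y = 0")
    case True
    then show ?thesis using \<open>d < e\<close> by (simp add: zero_power)
  next
    case False
    then have "subdegree Y \<ge> 1" using assms(1) subdegree_eq_0_iff[of Y] by linarith
    then have "e \<le> e * subdegree Y" by (metis mult_le_mono2 mult_1_right)
    then have "i < e * subdegree Y" using that by linarith
    then show ?thesis by (rule fps_pow_nth_below_subdegree)
  qed
  then show ?thesis using assms(2) by (simp add: fps_mult_nth)
qed

lemma euler_product_nth_eq_pentagonal_sum:
  fixes Y :: "'a::comm_ring_1 fps"
  assumes "Y $ 0 = 0" and "d \<le> K"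
  shows "(\<Prod>i\<in>{1..K}. 1 - Y^i) $ d = pentagonal_sum Y K $ d"
proof -
  have "{..K} = insert 0 {1..K}" and "{0<..K} = {1..K}" by auto
  then have "(\<Prod>i\<in>{1..K}. 1 - Y^i) = pentagonal_sum Y K - (\<Sum>k\<in>{1..K}. shanks_term Y K k)"
    using shanks_identity[of Y K] by (simp add: shanks_term_def eq_diff_eq)
  moreover have "shanks_term Y K k $ d = 0" if "k \<in> {1..K}" for k
  proof -
    have "2 \<le> k*(k+1)" using that mult_le_mono[of 1 k 2 "k+1"] by simp
    then have "1 \<le> k*(k+1) div 2" using div_le_mono[of 2 "k*(k+1)" 2] by simp
    moreover have "K \<le> K * k" using that by simp
    ultimately have "d < K*k + k*(k+1) div 2" using assms(2) by linarith
    then show ?thesis unfolding shanks_term_def by (rule fps_mult_power_nth_below[OF assms(1)])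
  qed
  ultimately show ?thesis by (simp add: fps_sum_nth)
qed

lemma fps_mult_nth_cong:
  assumes "\<And>i. i \<le> n \<Longrightarrow> f $ i = g $ i"
  shows "(f * h) $ n = (g * h) $ n"
  using assms by (simp add: fps_mult_nth)

lemma of_nat_pentagonal_minus: "int (j*(3*j-1) div 2) = int j * (3 * int j - 1) div 2"
  by (cases j) (simp_all add: zdiv_int of_nat_diff algebra_simps)

lemma of_nat_pentagonal_plus: "int (j*(3*j+1) div 2) = int j * (3 * int j + 1) div 2"
  by (simp only: zdiv_int of_nat_mult of_nat_add of_nat_numeral of_nat_1)

lemma pentagonal_recurrence:
  fixes A :: "int fps" and c :: "int \<Rightarrow> int" and N K :: nat
  assumes "N > 0"
    and coeff: "\<And>t. t \<le> K \<Longrightarrow> c (int t) = A $ t"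
    and neg: "\<And>t. t < 0 \<Longrightarrow> c t = 0"
    and vanish: "((\<Prod>i\<in>{1..K}. 1 - fps_X^(N*i)) * A) $ K = 0"
  shows "c (int K) = (\<Sum>j=1..int K. (-1)^nat (j+1) *
           (c (int K - int N * (j*(3*j-1) div 2)) + c (int K - int N * (j*(3*j+1) div 2))))"
    (is "_ = (\<Sum>j=1..int K. ?F j)")
proof -
  let ?Y = "fps_X^N :: int fps"
  define c\<^sub>m c\<^sub>p where "c\<^sub>m j = c (int K - int (N * (j*(3*j-1) div 2)))"
    and "c\<^sub>p j = c (int K - int (N * (j*(3*j+1) div 2)))" for j
  have shift: "(fps_X^e * A) $ K = c (int K - int e)" for e
    using coeff[of "K - e"] by (auto simp: fps_X_power_mult_nth neg of_nat_diff not_less)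
  have sign: "((-1)^j * f) $ K = (-1)^j * f $ K" for j and f :: "int fps"
    by (cases "even j") auto
  have "((\<Prod>i\<in>{1..K}. 1 - fps_X^(N*i)) * A) $ K = (pentagonal_sum ?Y K * A) $ K"
    using euler_product_nth_eq_pentagonal_sum[of ?Y] \<open>N > 0\<close>
    by (intro fps_mult_nth_cong) (simp add: power_mult)
  then have "0 = (pentagonal_sum ?Y K * A) $ K"
    using vanish by simp
  also have "\<dots> = (\<Sum>j\<le>K. (-1)^j * c\<^sub>p j) + (\<Sum>j\<in>{1..K}. (-1)^j * c\<^sub>m j)"
    unfolding pentagonal_sum_def c\<^sub>m_def c\<^sub>p_def
    by (simp add: distrib_right sum_distrib_right fps_sum_nth mult.assoc sign shift
                  power_mult[symmetric])
  also have "\<dots> = c (int K) - (\<Sum>j\<in>{1..K}. (-1)^(j+1) * (c\<^sub>m j + c\<^sub>p j))"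
  proof -
    have "{..K} = insert 0 {1..K}" and "c\<^sub>p 0 = c (int K)" by (auto simp: c\<^sub>p_def)
    then show ?thesis by (simp add: sum.distrib sum_subtractf sum_negf algebra_simps)
  qed
  finally have "c (int K) = (\<Sum>j\<in>{1..K}. (-1)^(j+1) * (c\<^sub>m j + c\<^sub>p j))" by simp
  also have "\<dots> = (\<Sum>j\<in>{1..K}. ?F (int j))"
    unfolding c\<^sub>m_def c\<^sub>p_def of_nat_mult of_nat_pentagonal_minus of_nat_pentagonal_plus
    by (simp add: nat_add_distrib)
  also have "\<dots> = (\<Sum>j=1..int K. ?F j)"
    using sum.atLeast_int_atMost_int_shift[of ?F 1 K] by (simp add: comp_def)
  finally show ?thesis .
qed

definition restricted_partitions :: "nat set \<Rightarrow> nat \<Rightarrow> nat \<Rightarrow> nat multiset set" where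
  "restricted_partitions S K n =
     {M. set_mset M \<subseteq> {1..K} \<and> sum_mset M = n \<and> (\<forall>x\<in>#M. count M x \<in> S)}"

lemma restricted_partitions_0: "restricted_partitions S 0 n = (if n = 0 then {{#}} else {})"
  by (auto simp: restricted_partitions_def)

lemma restricted_partitions_Suc:
  assumes "0 \<in> S"
  shows "restricted_partitions S (Suc K) n =
    (\<Union>s\<in>{s\<in>S. Suc K * s \<le> n}.
       (\<lambda>M. M + replicate_mset s (Suc K)) ` restricted_partitions S K (n - Suc K * s))"
  (is "_ = (\<Union>s\<in>_. ?add s ` _)")
proof (intro set_eqI iffI)
  fix M assume M: "M \<in> restricted_partitions S (Suc K) n"
  define s where "s = count M (Suc K)"
  define M' where "M' = filter_mset (\<lambda>x. x \<noteq> Suc K) M"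
  have "M = M' + filter_mset (\<lambda>x. \<not> x \<noteq> Suc K) M"
    unfolding M'_def by (rule multiset_partition)
  then have M_eq: "M = ?add s M'"
    by (simp add: s_def filter_eq_replicate_mset)
  have "sum_mset M = n" using M by (simp add: restricted_partitions_def)
  then have "sum_mset M' + Suc K * s = n"
    by (subst (asm) M_eq) (simp add: mult.commute)
  moreover have "s \<in> S"
    using M assms by (cases "s = 0") (auto simp: s_def restricted_partitions_def)
  moreover have "M' \<in> restricted_partitions S K (sum_mset M')"
    using M by (auto simp: M'_def restricted_partitions_def)
  ultimately show "M \<in> (\<Union>s\<in>{s\<in>S. Suc K * s \<le> n}.
                             ?add s ` restricted_partitions S K (n - Suc K * s))"
    using M_eq by (intro UN_I[of s]) auto
next
  fix M assume "M \<in> (\<Union>s\<in>{s\<in>S. Suc K * s \<le> n}. ?add s ` restricted_partitions S K (n - Suc K * s))"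
  then obtain s M' where s: "s \<in> S" "Suc K * s \<le> n"
    and M': "M' \<in> restricted_partitions S K (n - Suc K * s)" and M_eq: "M = ?add s M'"
    by blast
  have "Suc K \<notin># M'" using M' by (auto simp: restricted_partitions_def)
  then have "count M x \<in> S" if "x \<in># M" for x
    using that M' s M_eq by (cases "x = Suc K") (auto simp: restricted_partitions_def not_in_iff split: if_splits)
  then show "M \<in> restricted_partitions S (Suc K) n"
    using M' s M_eq by (auto simp: restricted_partitions_def)
qed

lemma finite_restricted_partitions:
  assumes "0 \<in> S"
  shows "finite (restricted_partitions S K n)"
proof (induction K arbitrary: n)
  case (Suc K)
  have "finite {s\<in>S. Suc K * s \<le> n}"
    by (rule finite_subset[of _ "{..n}"]) auto
  then show ?case using Suc.IH by (simp add: restricted_partitions_Suc[OF assms])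
qed (simp add: restricted_partitions_0)

lemma card_restricted_partitions:
  assumes "finite S" and "0 \<in> S"
  shows "of_nat (card (restricted_partitions S K n)) =
           (\<Prod>x\<in>{1..K}. \<Sum>s\<in>S. fps_X^(x*s) :: 'a::comm_semiring_1 fps) $ n"
proof (induction K arbitrary: n)
  case 0
  then show ?case by (simp add: restricted_partitions_0)
next
  case (Suc K)
  let ?S = "{s\<in>S. Suc K * s \<le> n}"
  let ?add = "\<lambda>s M. M + replicate_mset s (Suc K)"
  let ?P = "\<Prod>x\<in>{1..K}. \<Sum>s\<in>S. fps_X^(x*s) :: 'a fps"
  have count_top: "count (?add s M) (Suc K) = s" if "M \<in> restricted_partitions S K m" for s M m
    using that by (auto simp: restricted_partitions_def not_in_iff)
  have disjoint: "?add s ` restricted_partitions S K (n - Suc K * s) \<inter>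
                  ?add s' ` restricted_partitions S K (n - Suc K * s') = {}" if "s \<noteq> s'" for s s'
    using that count_top by (auto simp del: count_union count_replicate_mset) metis
  have "card (restricted_partitions S (Suc K) n) =
          (\<Sum>s\<in>?S. card (?add s ` restricted_partitions S K (n - Suc K * s)))"
    unfolding restricted_partitions_Suc[OF assms(2)]
    using assms disjoint by (intro card_UN_disjoint) (auto intro: finite_restricted_partitions)
  also have "\<dots> = (\<Sum>s\<in>S. if Suc K * s \<le> n then card (restricted_partitions S K (n - Suc K * s)) else 0)"
    by (simp add: card_image inj_on_def sum.inter_filter[OF assms(1)] del: mult_Suc)
  finally have "of_nat (card (restricted_partitions S (Suc K) n)) =
                  (\<Sum>s\<in>S. if Suc K * s \<le> n then ?P $ (n - Suc K * s) else (0::'a))"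
    by (simp add: Suc.IH of_nat_sum if_distrib[of of_nat] cong: if_cong)
  also have "\<dots> = ((\<Sum>s\<in>S. fps_X^(Suc K * s)) * ?P) $ n"
    by (auto simp: sum_distrib_right fps_sum_nth fps_X_power_mult_nth simp del: mult_Suc
             intro!: sum.cong)
  also have "\<dots> = (\<Prod>x\<in>{1..Suc K}. \<Sum>s\<in>S. fps_X^(x*s) :: 'a fps) $ n"
    by (simp add: atLeastAtMostSuc_conv del: mult_Suc)
  finally show ?case .
qed

lemma partitions_with_mults_eq_restricted:
  assumes "t \<le> K"
  shows "{M \<in> partitions t. \<forall>x\<in>#M. count M x \<in> S} = restricted_partitions S K t"
proof -
  have "x \<le> t" if "sum_mset M = t" "x \<in># M" for M x
    using that by (metis le_add1 sum_mset.remove)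
  then have "set_mset M \<subseteq> {1..K} \<longleftrightarrow> (\<forall>x\<in>#M. x > 0)" if "sum_mset M = t" for M
    using that assms by (fastforce simp: Suc_le_eq)
  then show ?thesis
    by (auto simp: partitions_def restricted_partitions_def)
qed

lemma allowed_mult_eq_image:
  "allowed_mult p v r a m = (\<lambda>(j, k). j * (p*r + a) + p * k) ` ({..<v} \<times> {..<m})"
  unfolding allowed_mult_def by auto

lemma inj_on_lincomb_coprime:
  fixes N p :: nat
  assumes "coprime N p"
  shows "inj_on (\<lambda>(j, k). j * N + p * k) ({..<p} \<times> UNIV)"
proof (rule inj_onI, clarsimp)
  fix j k j' k' :: nat
  assume j: "j < p" "j' < p" and eq: "j * N + p * k = j' * N + p * k'"
  have "(j * N) mod p = (j * N + p * k) mod p" by simp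
  also have "\<dots> = (j' * N) mod p" unfolding eq by simp
  finally have "[j = j'] (mod p)"
    using cong_mult_rcancel_nat[OF assms] by (simp add: cong_def)
  then have "j = j'" using j by (rule cong_less_modulus_unique_nat)
  then show "j = j' \<and> k = k'" using eq j by simp
qed

lemma sum_power_lincomb:
  fixes z :: "'a::comm_ring_1" and N p :: nat
  assumes "coprime N p" and "v \<le> p"
  shows "(\<Sum>s\<in>(\<lambda>(j, k). j * N + p * k) ` ({..<v} \<times> {..<m}). z^s) * (1 - z^N)
           = (1 - z^(N * v)) * (\<Sum>k<m. z^(p*k))"
proof -
  have "inj_on (\<lambda>(j, k). j * N + p * k) ({..<v} \<times> {..<m})"
    by (rule inj_on_subset[OF inj_on_lincomb_coprime[OF assms(1)]]) (use assms(2) in auto)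
  then have "(\<Sum>s\<in>(\<lambda>(j, k). j * N + p * k) ` ({..<v} \<times> {..<m}). z^s)
               = (\<Sum>j<v. \<Sum>k<m. (z^N)^j * z^(p*k))"
    by (auto simp: sum.reindex sum.cartesian_product power_add power_mult[symmetric] ac_simps intro!: sum.cong)
  also have "\<dots> = (\<Sum>j<v. (z^N)^j) * (\<Sum>k<m. z^(p*k))"
    by (simp add: sum_product)
  finally show ?thesis
    using one_diff_power_eq[of "z^N" v] by (simp add: power_mult mult_ac)
qed

definition supported_on_multiples :: "nat \<Rightarrow> 'a::comm_ring_1 fps \<Rightarrow> bool" where
  "supported_on_multiples g f \<longleftrightarrow> (\<forall>i. \<not> g dvd i \<longrightarrow> f $ i = 0)"

lemma supported_on_multiples_one: "supported_on_multiples g 1"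
  by (simp add: supported_on_multiples_def)

lemma supported_on_multiples_X_power: "g dvd k \<Longrightarrow> supported_on_multiples g (fps_X^k)"
  by (auto simp: supported_on_multiples_def)

lemma supported_on_multiples_diff:
  "supported_on_multiples g f \<Longrightarrow> supported_on_multiples g h \<Longrightarrow>
     supported_on_multiples g (f - h)"
  by (simp add: supported_on_multiples_def)

lemma supported_on_multiples_mult:
  assumes "supported_on_multiples g f" and "supported_on_multiples g h"
  shows "supported_on_multiples g (f * h)"
proof -
  have "f $ i * h $ (n - i) = 0" if "\<not> g dvd n" "i \<le> n" for n i
  proof (cases "g dvd i")
    case True
    then have "\<not> g dvd (n - i)" using that by (metis dvd_add le_add_diff_inverse)
    then show ?thesis using assms(2) by (simp add: supported_on_multiples_def)
  qed (use assms(1) in \<open>simp add: supported_on_multiples_def\<close>)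
  then show ?thesis by (simp add: supported_on_multiples_def fps_mult_nth)
qed

lemma supported_on_multiples_sum:
  "(\<And>x. x \<in> A \<Longrightarrow> supported_on_multiples g (f x)) \<Longrightarrow>
     supported_on_multiples g (\<Sum>x\<in>A. f x)"
  by (simp add: supported_on_multiples_def fps_sum_nth)

lemma supported_on_multiples_prod:
  "(\<And>x. x \<in> A \<Longrightarrow> supported_on_multiples g (f x)) \<Longrightarrow>
     supported_on_multiples g (\<Prod>x\<in>A. f x)"
  by (induction A rule: infinite_finite_induct)
     (simp_all add: supported_on_multiples_one supported_on_multiples_mult)

lemma allowed_mult_euler_product_nth_eq_0:
  assumes "coprime a p" and "v \<le> p" and "\<not> gcd v p dvd K"
  shows "((\<Prod>i\<in>{1..K}. 1 - fps_X^((p*r + a) * i)) *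
          (\<Prod>x\<in>{1..K}. \<Sum>s\<in>allowed_mult p v r a m. fps_X^(x*s))) $ K = (0::'a::comm_ring_1)"
proof -
  let ?N = "p*r + a"
  have coprime: "coprime ?N p"
    using assms(1) gcd_add_mult[of p r a] by (simp add: coprime_iff_gcd_eq_1 gcd.commute mult.commute)
  have "(\<Sum>s\<in>allowed_mult p v r a m. fps_X^(x*s)) * (1 - fps_X^(?N*x))
          = (1 - fps_X^(x*(?N*v))) * (\<Sum>k<m. fps_X^(x*(p*k)) :: 'a fps)" for x
    using sum_power_lincomb[OF coprime assms(2), of "fps_X^x" m] allowed_mult_eq_image[of p v r a m]
    by (simp only: power_mult[symmetric] mult.commute[of ?N x])
  then have "(\<Prod>i\<in>{1..K}. 1 - fps_X^(?N * i)) *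
               (\<Prod>x\<in>{1..K}. \<Sum>s\<in>allowed_mult p v r a m. fps_X^(x*s))
     = (\<Prod>x\<in>{1..K}. (1 - fps_X^(x*(?N*v))) * (\<Sum>k<m. fps_X^(x*(p*k)) :: 'a fps))"
    by (simp only: prod.distrib[symmetric] mult.commute[of "1 - _"])
  moreover have "supported_on_multiples (gcd v p) \<dots>"
    by (intro supported_on_multiples_prod supported_on_multiples_mult supported_on_multiples_diff
              supported_on_multiples_one supported_on_multiples_sum supported_on_multiples_X_power)
       simp_all
  ultimately show ?thesis using assms(3) by (simp add: supported_on_multiples_def)
qed

theorem theorem4p1:
  fixes p a r m v :: nat and n :: int
  assumes "p > 0" and "a > 0" and "gcd a p = 1"
    and "m \<ge> 1" and "1 \<le> v" and "v \<le> p"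
    and "\<not> (int (gcd v p) dvd n)"
  shows "b p v r a m n =
    (\<Sum>j = 1..n. (-1) ^ nat (j + 1) *
       (b p v r a m (n - int (p * r + a) * (j * (3 * j - 1) div 2))
      + b p v r a m (n - int (p * r + a) * (j * (3 * j + 1) div 2))))"
proof (cases "n > 0")
  case False
  then have "n < 0" using assms(7) by (cases "n = 0") auto
  then show ?thesis by (simp add: b_def)
next
  case True
  define K where "K = nat n"
  let ?S = "allowed_mult p v r a m"
  let ?A = "\<Prod>x\<in>{1..K}. \<Sum>s\<in>?S. fps_X^(x*s) :: int fps"
  have n_eq: "n = int K" using True by (simp add: K_def)
  have "0 \<in> ?S" using assms(4,5) by (force simp: allowed_mult_def)
  moreover have "finite ?S" by (simp add: allowed_mult_eq_image)
  ultimately have coeff: "b p v r a m (int t) = ?A $ t" if "t \<le> K" for t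
    using that card_restricted_partitions partitions_with_mults_eq_restricted by (simp add: b_def)
  have neg: "b p v r a m t = 0" if "t < 0" for t
    using that by (simp add: b_def)
  have "((\<Prod>i\<in>{1..K}. 1 - fps_X^((p*r + a) * i)) * ?A) $ K = 0"
  proof (rule allowed_mult_euler_product_nth_eq_0)
    show "coprime a p" using assms(3) by (simp add: coprime_iff_gcd_eq_1)
    show "\<not> gcd v p dvd K" using assms(7) by (simp add: n_eq)
  qed (fact assms(6))
  with assms(2) coeff neg show ?thesis
    unfolding n_eq by (intro pentagonal_recurrence) simp_all
qed

end
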